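(* Let $A\in\mathfrak{H}_n$, $B\in\mathfrak{M}_n$, $N\in\mathbb{N}$. Then \[ \sum_{(k_1,\dots,k_N)\in\{1,\dots,l\}^N}\|M_{k_1,\dots,k_N}\|\le n\,e^{n\|B\|}. \]
   Context: Let $\lambda_1,\dots,\lambda_l$ be the distinct eigenvalues of the Hermitian matrix $A$ and $E_{\lambda_1},\dots,E_{\lambda_l}$ the corresponding orthogonal spectral projectors ($AE_{\lambda_j}=\lambda_jE_{\lambda_j}$, $\sum_j E_{\lambda_j}=I_n$). For $(k_1,\dots,k_N)\in\{1,\dots,l\}^N$, $M_{k_1,\dots,k_N}=E_{\lambda_{k_1}}e^{B/N}E_{\lambda_{k_2}}e^{B/N}\cdots E_{\lambda_{k_N}}e^{B/N}$. $\|\cdot\|$ is the operator norm. *)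

theory Defs
  imports "HOL-Analysis.Analysis"
begin

text \<open>Complex n x n matrices are modelled as complex^'n^'n (n = CARD('n)).\<close>

definition cnj_transpose :: "complex^'n^'m \<Rightarrow> complex^'m^'n" where
  "cnj_transpose M = (\<chi> i j. cnj (M $ j $ i))"

definition hermitian :: "complex^'n^'n \<Rightarrow> bool" where
  "hermitian M \<longleftrightarrow> cnj_transpose M = M"

definition eigenvalues :: "complex^'n^'n \<Rightarrow> complex set" where
  "eigenvalues M = {c. \<exists>v. v \<noteq> 0 \<and> M *v v = c *s v}"

primrec matpow :: "complex^'n^'n \<Rightarrow> nat \<Rightarrow> complex^'n^'n" where
  "matpow M 0 = mat 1"
| "matpow M (Suc k) = M ** matpow M k"

definition mexp :: "complex^'n^'n \<Rightarrow> complex^'n^'n" where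
  "mexp M = (\<Sum>k. (1 / fact k) *\<^sub>R matpow M k)"

definition opnorm :: "complex^'n^'n \<Rightarrow> real" where
  "opnorm M = onorm (\<lambda>x. M *v x)"

text \<open>Ordered product E(k 0) e^X E(k 1) e^X ... E(k (N-1)) e^X.\<close>
definition Mprod :: "(complex \<Rightarrow> complex^'n^'n) \<Rightarrow> complex^'n^'n \<Rightarrow> nat \<Rightarrow> (nat \<Rightarrow> complex) \<Rightarrow> complex^'n^'n" where
  "Mprod E X N k = foldr (\<lambda>i P. E (k i) ** X ** P) [0..<N] (mat 1)"

end

theory Submission
  imports Defs
begin

text \<open>
  Let \<open>S\<close> be the spectrum of \<open>A\<close>, \<open>X = e\<^bsup>B/N\<^esup>\<close> and \<open>Z = X - I\<close>. For a word of length \<open>m\<close>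
  ending in \<open>b \<in> S\<close>, sum the operator norms of the partial products \<open>M E\<^sub>b\<close> into a weight
  \<open>H\<^sub>m(b)\<close>. Appending a letter gives \<open>H\<^sub>m\<^sub>+\<^sub>1(b) \<le> \<Sum>\<^sub>a H\<^sub>m(a) \<parallel>E\<^sub>a X E\<^sub>b\<parallel>\<close>, and
  \<open>\<parallel>E\<^sub>a X E\<^sub>b\<parallel> \<le> \<delta>\<^sub>a\<^sub>b + \<parallel>E\<^sub>a Z E\<^sub>b\<parallel>\<^sub>F\<close>. Since the blocks \<open>E\<^sub>a Z E\<^sub>b\<close> partition the entries of \<open>Z\<close>
  in Frobenius norm, the \<open>\<ell>\<^sup>2\<close> norm of \<open>H\<close> grows by a factor at most
  \<open>1 + \<parallel>Z\<parallel>\<^sub>F \<le> 1 + \<surd>n (e\<^bsup>\<parallel>B\<parallel>/N\<^esup> - 1) \<le> e\<^bsup>n\<parallel>B\<parallel>/N\<^esup>\<close> per letter. Cauchy--Schwarz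
  and \<open>|S| \<le> n\<close> then give the bound \<open>n e\<^bsup>n\<parallel>B\<parallel>\<^esup>\<close>.
\<close>

section \<open>Operator and Frobenius norms\<close>

lemma opnorm: "norm (M *v x) \<le> opnorm M * norm x"
  for M :: "complex^'n^'n"
  unfolding opnorm_def by (rule onorm) simp

lemma opnorm_le: "(\<And>x. norm (M *v x) \<le> c * norm x) \<Longrightarrow> opnorm M \<le> c"
  for M :: "complex^'n^'n"
  unfolding opnorm_def by (rule onorm_le) auto

lemma opnorm_nonneg: "0 \<le> opnorm M" for M :: "complex^'n^'n"
  unfolding opnorm_def by (rule onorm_pos_le) simp

lemma opnorm_zero: "opnorm (0 :: complex^'n^'n) = 0"
  using opnorm_le[of "0 :: complex^'n^'n" 0] opnorm_nonneg[of "0 :: complex^'n^'n"] by simp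

lemma opnorm_mat_1_le: "opnorm (mat 1 :: complex^'n^'n) \<le> 1"
  by (rule opnorm_le) simp

lemma opnorm_matrix_mult_le: "opnorm (P ** Q) \<le> opnorm P * opnorm Q"
  for P Q :: "complex^'n^'n"
proof (rule opnorm_le)
  fix x
  have "norm ((P ** Q) *v x) = norm (P *v (Q *v x))" by (simp add: matrix_vector_mul_assoc)
  also have "\<dots> \<le> opnorm P * norm (Q *v x)" by (rule opnorm)
  also have "\<dots> \<le> opnorm P * (opnorm Q * norm x)"
    by (rule mult_left_mono[OF opnorm opnorm_nonneg])
  finally show "norm ((P ** Q) *v x) \<le> opnorm P * opnorm Q * norm x" by (simp add: mult.assoc)
qed

lemma opnorm_add_le: "opnorm (P + Q) \<le> opnorm P + opnorm Q"
  for P Q :: "complex^'n^'n"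
proof (rule opnorm_le)
  fix x
  have "norm ((P + Q) *v x) \<le> norm (P *v x) + norm (Q *v x)"
    by (simp add: matrix_vector_mult_add_rdistrib norm_triangle_ineq)
  also have "\<dots> \<le> opnorm P * norm x + opnorm Q * norm x"
    by (rule add_mono; rule opnorm)
  finally show "norm ((P + Q) *v x) \<le> (opnorm P + opnorm Q) * norm x"
    by (simp add: algebra_simps)
qed

lemma matrix_scaleR_vector_mult: "(r *\<^sub>R M) *v x = r *\<^sub>R (M *v x)"
  for M :: "complex^'n^'n"
  by (simp add: matrix_vector_mult_def vec_eq_iff scaleR_sum_right)

lemma opnorm_scaleR_le: "opnorm (r *\<^sub>R M) \<le> \<bar>r\<bar> * opnorm M"
  for M :: "complex^'n^'n"
proof (rule opnorm_le)
  fix x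
  have "norm ((r *\<^sub>R M) *v x) = \<bar>r\<bar> * norm (M *v x)"
    by (simp add: matrix_scaleR_vector_mult)
  also have "\<dots> \<le> \<bar>r\<bar> * (opnorm M * norm x)" by (rule mult_left_mono[OF opnorm]) simp
  finally show "norm ((r *\<^sub>R M) *v x) \<le> \<bar>r\<bar> * opnorm M * norm x" by (simp add: mult.assoc)
qed

lemma mat_add_rdistrib: "(P + Q) ** R = P ** R + Q ** R"
  for P Q R :: "complex^'n^'n"
  by (simp add: matrix_matrix_mult_def vec_eq_iff distrib_right sum.distrib)

text \<open>The norm on \<open>complex^'n^'m\<close> is the Frobenius (Hilbert--Schmidt) norm.\<close>

lemma norm_vec_sq: "(norm v)^2 = (\<Sum>i\<in>UNIV. (cmod (v$i))^2)"
  for v :: "complex^'n"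
  unfolding norm_vec_def L2_set_def by (simp add: sum_nonneg)

lemma norm_matrix_sq: "(norm M)^2 = (\<Sum>i\<in>UNIV. \<Sum>j\<in>UNIV. (cmod (M$i$j))^2)"
  for M :: "complex^'n^'m"
  unfolding norm_vec_def L2_set_def by (simp add: sum_nonneg)

lemma norm_matrix_sq_columns: "(norm M)^2 = (\<Sum>j\<in>UNIV. (norm (M *v axis j 1))^2)"
  for M :: "complex^'n^'m"
proof -
  have "(M *v axis j 1) $ i = M$i$j" for i j
    by (simp add: matrix_vector_mult_def axis_def if_distrib if_distribR cong: if_cong)
  then show ?thesis
    unfolding norm_matrix_sq norm_vec_sq by (simp only:) (rule sum.swap)
qed

lemma norm_transpose: "norm (transpose M) = norm M" for M :: "complex^'n^'m"
proof -
  have "(norm (transpose M))^2 = (norm M)^2"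
    unfolding norm_matrix_sq transpose_def by (simp only: vec_lambda_beta) (rule sum.swap)
  then show ?thesis by (simp add: power2_eq_iff_nonneg)
qed

lemma norm_mat_1_sq: "(norm (mat 1 :: complex^'n^'n))^2 = real CARD('n)"
  by (simp add: norm_matrix_sq mat_def if_distrib if_distribR sum.delta cong: if_cong)

lemma norm_axis_complex_1 [simp]: "norm (axis j (1::complex) :: complex^'n) = 1"
  by (simp add: norm_vec_def L2_set_def axis_def if_distrib if_distribR sum.delta cong: if_cong)

lemma opnorm_le_norm: "opnorm M \<le> norm M" for M :: "complex^'n^'n"
proof (rule opnorm_le)
  fix x :: "complex^'n"
  have row: "(cmod (\<Sum>j\<in>UNIV. M$i$j * x$j))^2 \<le> (\<Sum>j\<in>UNIV. (cmod (M$i$j))^2) * (norm x)^2"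
    for i
  proof -
    have "cmod (\<Sum>j\<in>UNIV. M$i$j * x$j) \<le> (\<Sum>j\<in>UNIV. \<bar>cmod (M$i$j)\<bar> * \<bar>cmod (x$j)\<bar>)"
      by (rule order_trans[OF norm_sum]) (simp add: norm_mult)
    also have "\<dots> \<le> L2_set (\<lambda>j. cmod (M$i$j)) UNIV * norm x"
      unfolding norm_vec_def by (rule L2_set_mult_ineq)
    finally have "(cmod (\<Sum>j\<in>UNIV. M$i$j * x$j))^2 \<le> (L2_set (\<lambda>j. cmod (M$i$j)) UNIV * norm x)^2"
      by (rule power_mono) simp
    then show ?thesis by (simp add: power_mult_distrib L2_set_def sum_nonneg)
  qed
  have "(norm (M *v x))^2 = (\<Sum>i\<in>UNIV. (cmod (\<Sum>j\<in>UNIV. M$i$j * x$j))^2)"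
    by (simp add: norm_vec_sq matrix_vector_mult_def)
  also have "\<dots> \<le> (\<Sum>i\<in>UNIV. (\<Sum>j\<in>UNIV. (cmod (M$i$j))^2) * (norm x)^2)"
    by (rule sum_mono) (rule row)
  also have "\<dots> = (norm M * norm x)^2"
    by (simp add: norm_matrix_sq power_mult_distrib sum_distrib_right)
  finally show "norm (M *v x) \<le> norm M * norm x"
    by (rule power2_le_imp_le) simp
qed

lemma norm_le_sqrt_card_opnorm: "norm M \<le> sqrt (real CARD('n)) * opnorm M"
  for M :: "complex^'n^'n"
proof -
  have col: "(norm (M *v axis j 1))^2 \<le> (opnorm M)^2" for j :: 'n
  proof (rule power_mono)
    show "norm (M *v axis j 1) \<le> opnorm M"
      using opnorm[of M "axis j 1"] by simp
  qed simp
  have "(norm M)^2 \<le> (\<Sum>j\<in>(UNIV::'n set). (opnorm M)^2)"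
    unfolding norm_matrix_sq_columns by (rule sum_mono) (rule col)
  then have "(norm M)^2 \<le> (sqrt (real CARD('n)) * opnorm M)^2"
    by (simp add: power_mult_distrib)
  then show ?thesis by (rule power2_le_imp_le) (simp add: opnorm_nonneg)
qed

text \<open>The Hermitian inner product; \<open>inner\<close> is only its real part.\<close>

definition cinner :: "complex^'n \<Rightarrow> complex^'n \<Rightarrow> complex" where
  "cinner x y = (\<Sum>i\<in>UNIV. x$i * cnj (y$i))"

lemma inner_eq_Re_cinner: "inner x y = Re (cinner x y)" for x y :: "complex^'n"
  by (simp add: inner_vec_def cinner_def inner_complex_def Re_sum)

lemma cinner_self: "cinner x x = complex_of_real ((norm x)^2)"
proof -
  have "cinner x x = (\<Sum>i\<in>UNIV. complex_of_real ((cmod (x$i))^2))"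
    unfolding cinner_def by (rule sum.cong[OF refl]) (metis complex_norm_square)
  then show ?thesis by (simp add: norm_vec_sq)
qed

lemma cinner_scaleC_left: "cinner (c *s x) y = c * cinner x y"
  by (simp add: cinner_def sum_distrib_left mult.assoc)

lemma cinner_scaleC_right: "cinner x (c *s y) = cnj c * cinner x y"
  by (simp add: cinner_def sum_distrib_left mult_ac)

lemma cinner_matrix_vector_mult_left: "cinner (M *v x) y = cinner x (cnj_transpose M *v y)"
  for M :: "complex^'n^'n"
proof -
  have "cinner (M *v x) y = (\<Sum>i\<in>UNIV. \<Sum>j\<in>UNIV. M$i$j * x$j * cnj (y$i))"
    unfolding cinner_def matrix_vector_mult_def by (simp add: sum_distrib_right)
  also have "\<dots> = (\<Sum>j\<in>UNIV. \<Sum>i\<in>UNIV. M$i$j * x$j * cnj (y$i))"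
    by (rule sum.swap)
  also have "\<dots> = cinner x (cnj_transpose M *v y)"
    unfolding cinner_def matrix_vector_mult_def cnj_transpose_def
    by (simp add: sum_distrib_left cnj_sum mult_ac)
  finally show ?thesis .
qed

lemma cnj_transpose_mult: "cnj_transpose (P ** Q) = cnj_transpose Q ** cnj_transpose P"
  for P Q :: "complex^'n^'n"
  by (simp add: cnj_transpose_def matrix_matrix_mult_def vec_eq_iff cnj_sum mult.commute)

lemma cnj_transpose_mat: "cnj_transpose (mat c :: complex^'n^'n) = mat (cnj c)"
  by (simp add: cnj_transpose_def mat_def vec_eq_iff)

lemma mat_matrix_mult: "mat c ** M = (\<chi> i j. c * M$i$j)" for M :: "complex^'n^'n"
  by (simp add: matrix_matrix_mult_def mat_def vec_eq_iff if_distrib if_distribR sum.delta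
      cong: if_cong)

lemma matrix_mult_mat: "M ** mat c = (\<chi> i j. M$i$j * c)" for M :: "complex^'n^'n"
  by (simp add: matrix_matrix_mult_def mat_def vec_eq_iff if_distrib if_distribR sum.delta'
      cong: if_cong)

lemma mat_matrix_mult_commute: "M ** mat c = mat c ** M" for M :: "complex^'n^'n"
  by (simp add: mat_matrix_mult matrix_mult_mat mult.commute)

lemma mat_matrix_vector_mult: "(mat c ** M) *v v = c *s (M *v v)" for M :: "complex^'n^'n"
  by (simp add: mat_matrix_mult matrix_vector_mult_def vec_eq_iff sum_distrib_left mult_ac)

lemma matrix_vector_mult_scaleC: "M *v (c *s v) = c *s (M *v v)" for M :: "complex^'n^'n"
  by (simp add: matrix_vector_mult_def vec_eq_iff sum_distrib_left mult_ac)

lemma sum_matrix_vector_mult: "(\<Sum>a\<in>S. f a) *v v = (\<Sum>a\<in>S. f a *v v)"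
  for f :: "'a \<Rightarrow> complex^'n^'n"
  by (induct S rule: infinite_finite_induct) (auto simp: matrix_vector_mult_add_rdistrib)

lemma transpose_sum: "transpose (\<Sum>a\<in>S. f a) = (\<Sum>a\<in>S. transpose (f a))"
  for f :: "'a \<Rightarrow> complex^'n^'n"
  by (induct S rule: infinite_finite_induct) (auto simp: transpose_def vec_eq_iff)

lemma mat_1_neq_0: "(mat 1 :: complex^'n^'n) \<noteq> 0"
proof
  assume "(mat 1 :: complex^'n^'n) = 0"
  then have "(mat 1 :: complex^'n^'n) $ i $ i = 0" for i by simp
  then show False by (simp add: mat_def)
qed

section \<open>Orthogonal resolutions of the identity\<close>

definition projector_resolution :: "'a set \<Rightarrow> ('a \<Rightarrow> complex^'n^'n) \<Rightarrow> bool" where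
  "projector_resolution S P \<longleftrightarrow> finite S \<and> (\<forall>a\<in>S. hermitian (P a)) \<and>
     (\<forall>a\<in>S. \<forall>b\<in>S. P a ** P b = (if a = b then P a else 0)) \<and> (\<Sum>a\<in>S. P a) = mat 1"

lemma projector_resolutionD:
  assumes "projector_resolution S P"
  shows "finite S" and "a \<in> S \<Longrightarrow> hermitian (P a)"
    and "a \<in> S \<Longrightarrow> b \<in> S \<Longrightarrow> P a ** P b = (if a = b then P a else 0)"
    and "(\<Sum>a\<in>S. P a) = mat 1"
  using assms unfolding projector_resolution_def by auto

lemma projector_resolution_norm_sq:
  assumes P: "projector_resolution S P"
  shows "(\<Sum>a\<in>S. (norm (P a *v v))^2) = (norm v)^2"
proof -
  have orth: "orthogonal (P a *v v) (P b *v v)" if "a \<in> S" "b \<in> S" "a \<noteq> b" for a b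
  proof -
    have "cinner (P a *v v) (P b *v v) = cinner v ((cnj_transpose (P a) ** P b) *v v)"
      by (simp add: cinner_matrix_vector_mult_left matrix_vector_mul_assoc)
    also have "\<dots> = 0"
      using that projector_resolutionD(2,3)[OF P] unfolding hermitian_def by (simp add: cinner_def)
    finally show ?thesis by (simp add: orthogonal_def inner_eq_Re_cinner)
  qed
  have "v = (\<Sum>a\<in>S. P a *v v)"
    using projector_resolutionD(4)[OF P] by (simp flip: sum_matrix_vector_mult)
  then have "(norm v)^2 = (norm (\<Sum>a\<in>S. P a *v v))^2" by simp
  also have "\<dots> = (\<Sum>a\<in>S. (norm (P a *v v))^2)"
    by (rule norm_sum_Pythagorean[OF projector_resolutionD(1)[OF P]])
      (use orth in \<open>auto simp: pairwise_def\<close>)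
  finally show ?thesis by simp
qed

lemma projector_resolution_norm_mult_left_sq:
  assumes "projector_resolution S P"
  shows "(\<Sum>a\<in>S. (norm (P a ** Z))^2) = (norm Z)^2"
proof -
  have "(\<Sum>a\<in>S. (norm (P a ** Z))^2)
      = (\<Sum>a\<in>S. \<Sum>j\<in>UNIV. (norm (P a *v (Z *v axis j 1)))^2)"
    by (simp add: norm_matrix_sq_columns matrix_vector_mul_assoc)
  also have "\<dots> = (\<Sum>j\<in>UNIV. \<Sum>a\<in>S. (norm (P a *v (Z *v axis j 1)))^2)"
    by (rule sum.swap)
  also have "\<dots> = (norm Z)^2"
    by (simp add: projector_resolution_norm_sq[OF assms] norm_matrix_sq_columns)
  finally show ?thesis .
qed

lemma projector_resolution_transpose:
  assumes P: "projector_resolution S P"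
  shows "projector_resolution S (\<lambda>a. transpose (P a))"
proof -
  have "hermitian (transpose (P a))" if "a \<in> S" for a
  proof -
    have "\<forall>i j. cnj (P a $ j $ i) = P a $ i $ j"
      using projector_resolutionD(2)[OF P that] by (simp add: hermitian_def cnj_transpose_def vec_eq_iff)
    then show ?thesis
      unfolding hermitian_def cnj_transpose_def transpose_def by (simp add: vec_eq_iff)
  qed
  moreover have "transpose (P a) ** transpose (P b) = (if a = b then transpose (P a) else 0)"
    if "a \<in> S" "b \<in> S" for a b
  proof -
    have "transpose (P a) ** transpose (P b) = transpose (P b ** P a)"
      by (simp add: matrix_transpose_mul)
    also have "\<dots> = (if a = b then transpose (P a) else 0)"
      using projector_resolutionD(3)[OF P that(2,1)] by (auto simp: transpose_def vec_eq_iff)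
    finally show ?thesis .
  qed
  moreover have "(\<Sum>a\<in>S. transpose (P a)) = mat 1"
    using projector_resolutionD(4)[OF P] by (simp flip: transpose_sum)
  ultimately show ?thesis
    using projector_resolutionD(1)[OF P] by (simp add: projector_resolution_def)
qed

lemma projector_resolution_norm_mult_right_sq:
  assumes "projector_resolution S P"
  shows "(\<Sum>b\<in>S. (norm (Z ** P b))^2) = (norm Z)^2"
proof -
  have "norm (Z ** P b) = norm (transpose (P b) ** transpose Z)" for b
    by (simp flip: matrix_transpose_mul add: norm_transpose)
  then have "(\<Sum>b\<in>S. (norm (Z ** P b))^2) = (\<Sum>b\<in>S. (norm (transpose (P b) ** transpose Z))^2)"
    by simp
  also have "\<dots> = (norm Z)^2"
    by (simp add: projector_resolution_norm_mult_left_sq[OF projector_resolution_transpose[OF assms]]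
        norm_transpose)
  finally show ?thesis .
qed

lemma projector_resolution_norm_sandwich_sq:
  assumes "projector_resolution S P"
  shows "(\<Sum>b\<in>S. \<Sum>a\<in>S. (norm (P a ** Z ** P b))^2) = (norm Z)^2"
proof -
  have "(\<Sum>b\<in>S. \<Sum>a\<in>S. (norm (P a ** Z ** P b))^2) = (\<Sum>a\<in>S. \<Sum>b\<in>S. (norm ((P a ** Z) ** P b))^2)"
    by (rule sum.swap)
  also have "\<dots> = (norm Z)^2"
    by (simp add: projector_resolution_norm_mult_right_sq[OF assms]
        projector_resolution_norm_mult_left_sq[OF assms])
  finally show ?thesis .
qed

lemma projector_resolution_opnorm_le_1:
  assumes P: "projector_resolution S P" and a: "a \<in> S"
  shows "opnorm (P a) \<le> 1"
proof (rule opnorm_le)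
  fix x
  have "(norm (P a *v x))^2 \<le> (\<Sum>b\<in>S. (norm (P b *v x))^2)"
    by (rule member_le_sum[OF a _ projector_resolutionD(1)[OF P]]) simp
  also have "\<dots> = (norm x)^2" by (rule projector_resolution_norm_sq[OF P])
  finally have "norm (P a *v x) \<le> norm x" by (rule power2_le_imp_le) simp
  then show "norm (P a *v x) \<le> 1 * norm x" by simp
qed

section \<open>Spectral projectors of a Hermitian matrix\<close>

locale spectral_resolution =
  fixes A :: "complex^'n^'n" and E :: "complex \<Rightarrow> complex^'n^'n"
  assumes hermitian: "hermitian A"
    and projector: "\<And>\<mu>. \<mu> \<in> eigenvalues A \<Longrightarrow> hermitian (E \<mu>) \<and> E \<mu> ** E \<mu> = E \<mu>"
    and eigenprojector: "\<And>\<mu>. \<mu> \<in> eigenvalues A \<Longrightarrow> A ** E \<mu> = mat \<mu> ** E \<mu>"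
    and sum_eq_1: "(\<Sum>\<mu>\<in>eigenvalues A. E \<mu>) = mat 1"
begin

lemma eigenvalue_real:
  assumes "\<mu> \<in> eigenvalues A"
  shows "cnj \<mu> = \<mu>"
proof -
  obtain v where v: "v \<noteq> 0" "A *v v = \<mu> *s v"
    using assms unfolding eigenvalues_def by auto
  have "cinner (A *v v) v = cinner v (A *v v)"
    using hermitian by (simp add: cinner_matrix_vector_mult_left hermitian_def)
  then have "\<mu> * cinner v v = cnj \<mu> * cinner v v"
    by (simp add: v(2) cinner_scaleC_left cinner_scaleC_right)
  moreover have "cinner v v \<noteq> 0" using v(1) by (simp add: cinner_self)
  ultimately show ?thesis by simp
qed

lemma projector_mult_left:
  assumes a: "a \<in> eigenvalues A"
  shows "E a ** A = mat a ** E a"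
proof -
  have "E a ** A = cnj_transpose (A ** E a)"
    using hermitian projector[OF a] by (simp add: cnj_transpose_mult hermitian_def)
  also have "\<dots> = cnj_transpose (mat a ** E a)" by (simp add: eigenprojector[OF a])
  also have "\<dots> = E a ** mat a"
    using projector[OF a] eigenvalue_real[OF a]
    by (simp add: cnj_transpose_mult hermitian_def cnj_transpose_mat)
  finally show ?thesis by (simp add: mat_matrix_mult_commute)
qed

lemma projectors_orthogonal:
  assumes a: "a \<in> eigenvalues A" and b: "b \<in> eigenvalues A" and "a \<noteq> b"
  shows "E a ** E b = 0"
proof -
  have "mat b ** (E a ** E b) = E a ** (mat b ** E b)"
    by (metis mat_matrix_mult_commute matrix_mul_assoc)
  also have "\<dots> = E a ** A ** E b"
    by (simp add: eigenprojector[OF b] flip: matrix_mul_assoc)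
  also have "\<dots> = mat a ** (E a ** E b)"
    by (simp add: projector_mult_left[OF a] matrix_mul_assoc)
  finally have "\<forall>i j. b * (E a ** E b)$i$j = a * (E a ** E b)$i$j"
    by (auto simp: mat_matrix_mult vec_eq_iff)
  with \<open>a \<noteq> b\<close> show ?thesis by (simp add: vec_eq_iff)
qed

lemma finite_eigenvalues: "finite (eigenvalues A)"
proof (rule ccontr)
  assume "infinite (eigenvalues A)"
  then show False using sum_eq_1 by (simp add: mat_1_neq_0)
qed

lemma projector_resolution: "projector_resolution (eigenvalues A) E"
  unfolding projector_resolution_def
  using finite_eigenvalues projector sum_eq_1 projectors_orthogonal by auto

text \<open>An eigenvector of \<open>a\<close> is killed by every other \<open>E c\<close>, so \<open>E a\<close> must fix it.\<close>

lemma projector_nonzero: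
  assumes a: "a \<in> eigenvalues A"
  shows "E a \<noteq> 0"
proof
  assume Ea: "E a = 0"
  obtain v where v: "v \<noteq> 0" "A *v v = a *s v" using a unfolding eigenvalues_def by auto
  have other: "E c *v v = 0" if c: "c \<in> eigenvalues A" "c \<noteq> a" for c
  proof -
    have "c *s (E c *v v) = (E c ** A) *v v"
      by (simp add: projector_mult_left[OF c(1)] mat_matrix_vector_mult)
    also have "\<dots> = a *s (E c *v v)"
      by (simp add: matrix_vector_mul_assoc[symmetric] v(2) matrix_vector_mult_scaleC)
    finally have "(c - a) *s (E c *v v) = 0"
      by (simp add: vector_sub_rdistrib)
    then show ?thesis using c(2) by (simp add: vec_eq_iff)
  qed
  have "v = (\<Sum>c\<in>eigenvalues A. E c *v v)"
    using sum_eq_1 by (simp flip: sum_matrix_vector_mult)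
  also have "\<dots> = E a *v v + (\<Sum>c\<in>eigenvalues A - {a}. E c *v v)"
    by (rule sum.remove[OF finite_eigenvalues a])
  also have "\<dots> = 0" using Ea other by simp
  finally show False using v(1) by simp
qed

text \<open>Each \<open>E a\<close> has Frobenius norm at least \<open>1\<close>, and these squared norms add up to
  \<open>\<parallel>I\<parallel>\<^sub>F\<^sup>2 = n\<close>.\<close>

lemma card_eigenvalues_le: "card (eigenvalues A) \<le> CARD('n)"
proof -
  have norm_ge_1: "1 \<le> norm (E a)" if a: "a \<in> eigenvalues A" for a
  proof -
    obtain x where x: "E a *v x \<noteq> 0"
      using projector_nonzero[OF a] matrix_eq[of "E a" 0] by auto
    have "E a *v (E a *v x) = E a *v x"
      using projector[OF a] by (simp add: matrix_vector_mul_assoc)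
    then have "norm (E a *v x) \<le> opnorm (E a) * norm (E a *v x)" by (metis opnorm)
    also have "\<dots> \<le> norm (E a) * norm (E a *v x)"
      by (rule mult_right_mono[OF opnorm_le_norm]) simp
    finally show ?thesis using x by simp
  qed
  have "real (card (eigenvalues A)) = (\<Sum>a\<in>eigenvalues A. 1)" by simp
  also have "\<dots> \<le> (\<Sum>a\<in>eigenvalues A. (norm (E a ** mat 1))^2)"
    by (rule sum_mono) (simp add: norm_ge_1 one_le_power)
  also have "\<dots> = real CARD('n)"
    using projector_resolution_norm_mult_left_sq[OF projector_resolution, of "mat 1"] norm_mat_1_sq
    by simp
  finally show ?thesis by simp
qed

end

section \<open>The matrix exponential\<close>

lemma opnorm_matpow_le: "opnorm (matpow C k) \<le> opnorm C ^ k"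
proof (induct k)
  case 0
  then show ?case by (simp add: opnorm_mat_1_le)
next
  case (Suc k)
  have "opnorm (matpow C (Suc k)) \<le> opnorm C * opnorm (matpow C k)"
    by (simp add: opnorm_matrix_mult_le)
  also have "\<dots> \<le> opnorm C * opnorm C ^ k"
    by (rule mult_left_mono[OF Suc opnorm_nonneg])
  finally show ?case by simp
qed

lemma bounded_linear_matrix_vector_mult_left: "bounded_linear (\<lambda>M::complex^'n^'n. M *v x)"
proof (rule bounded_linear_intro[where K="norm x"])
  fix M N :: "complex^'n^'n" and r :: real
  show "(M + N) *v x = M *v x + N *v x" by (simp add: matrix_vector_mult_add_rdistrib)
  show "(r *\<^sub>R M) *v x = r *\<^sub>R (M *v x)" by (rule matrix_scaleR_vector_mult)
  have "norm (M *v x) \<le> opnorm M * norm x" by (rule opnorm)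
  also have "\<dots> \<le> norm M * norm x" by (rule mult_right_mono[OF opnorm_le_norm]) simp
  finally show "norm (M *v x) \<le> norm M * norm x" .
qed

lemma summable_mexp: "summable (\<lambda>k. (1 / fact k) *\<^sub>R matpow C k)"
  for C :: "complex^'n^'n"
proof (rule summable_comparison_test'[where N=0])
  show "summable (\<lambda>k. sqrt (real CARD('n)) * (opnorm C ^ k /\<^sub>R fact k))"
    by (rule summable_mult[OF summable_exp_generic])
  fix k :: nat
  have "norm (matpow C k) \<le> sqrt (real CARD('n)) * opnorm C ^ k"
    by (rule order_trans[OF norm_le_sqrt_card_opnorm mult_left_mono[OF opnorm_matpow_le]]) simp
  then have "(1 / fact k) * norm (matpow C k) \<le> (1 / fact k) * (sqrt (real CARD('n)) * opnorm C ^ k)"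
    by (rule mult_left_mono) simp
  then show "norm ((1 / fact k) *\<^sub>R matpow C k) \<le> sqrt (real CARD('n)) * (opnorm C ^ k /\<^sub>R fact k)"
    by (simp add: divide_inverse mult_ac)
qed

lemma mexp_vector_mult: "mexp C *v x = (\<Sum>k. (1 / fact k) *\<^sub>R (matpow C k *v x))"
  for C :: "complex^'n^'n"
  unfolding mexp_def
  using bounded_linear.suminf[OF bounded_linear_matrix_vector_mult_left summable_mexp]
  by (simp add: matrix_scaleR_vector_mult)

lemma norm_mexp_term_le:
  "norm ((1 / fact k) *\<^sub>R (matpow C k *v x)) \<le> opnorm C ^ k /\<^sub>R fact k * norm x"
  for C :: "complex^'n^'n"
proof -
  have "norm (matpow C k *v x) \<le> opnorm C ^ k * norm x"
    by (rule order_trans[OF opnorm mult_right_mono[OF opnorm_matpow_le]]) simp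
  then have "(1 / fact k) * norm (matpow C k *v x) \<le> (1 / fact k) * (opnorm C ^ k * norm x)"
    by (rule mult_left_mono) simp
  then show ?thesis by (simp add: divide_inverse mult_ac)
qed

lemma opnorm_mexp_le: "opnorm (mexp C) \<le> exp (opnorm C)"
  for C :: "complex^'n^'n"
proof (rule opnorm_le)
  fix x :: "complex^'n"
  have s: "(\<lambda>k. opnorm C ^ k /\<^sub>R fact k * norm x) sums (exp (opnorm C) * norm x)"
    by (rule sums_mult2[OF exp_converges])
  have "norm (mexp C *v x) \<le> (\<Sum>k. opnorm C ^ k /\<^sub>R fact k * norm x)"
    unfolding mexp_vector_mult by (rule norm_suminf_le[OF norm_mexp_term_le sums_summable[OF s]])
  also have "\<dots> = exp (opnorm C) * norm x" using s by (simp add: sums_iff)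
  finally show "norm (mexp C *v x) \<le> exp (opnorm C) * norm x" .
qed

lemma opnorm_mexp_minus_1_le: "opnorm (mexp C - mat 1) \<le> exp (opnorm C) - 1"
  for C :: "complex^'n^'n"
proof (rule opnorm_le)
  fix x :: "complex^'n"
  have s: "(\<lambda>k. opnorm C ^ k /\<^sub>R fact k * norm x) sums (exp (opnorm C) * norm x)"
    by (rule sums_mult2[OF exp_converges])
  have s1: "(\<lambda>k. opnorm C ^ Suc k /\<^sub>R fact (Suc k) * norm x) sums (exp (opnorm C) * norm x - norm x)"
    using s by (subst sums_Suc_iff) simp
  have sm: "summable (\<lambda>k. (1 / fact k) *\<^sub>R (matpow C k *v x))"
    by (rule summable_comparison_test'[OF sums_summable[OF s]]) (rule norm_mexp_term_le)
  have "(mexp C - mat 1) *v x = (\<Sum>k. (1 / fact (Suc k)) *\<^sub>R (matpow C (Suc k) *v x))"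
    unfolding matrix_vector_mult_diff_rdistrib mexp_vector_mult suminf_split_head[OF sm]
    by simp
  also have "norm \<dots> \<le> (\<Sum>k. opnorm C ^ Suc k /\<^sub>R fact (Suc k) * norm x)"
    by (rule norm_suminf_le[OF norm_mexp_term_le sums_summable[OF s1]])
  also have "\<dots> = (exp (opnorm C) - 1) * norm x"
    using s1 by (simp add: sums_iff algebra_simps)
  finally show "norm ((mexp C - mat 1) *v x) \<le> (exp (opnorm C) - 1) * norm x" .
qed

text \<open>Bernoulli's inequality \<open>1 + n t \<le> (1 + t)\<^sup>n\<close> with \<open>t = e\<^sup>c - 1\<close>, after \<open>\<surd>n \<le> n\<close>.\<close>

lemma one_plus_sqrt_exp_minus_1_le:
  fixes c :: real
  assumes "0 \<le> c" "1 \<le> n"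
  shows "1 + sqrt (real n) * (exp c - 1) \<le> exp (real n * c)"
proof -
  have e: "0 \<le> exp c - 1" using assms(1) by simp
  have "sqrt (real n) \<le> real n"
    using assms(2) real_sqrt_le_mono[of "real n" "real n ^ 2"] by (simp add: power2_eq_square)
  then have "1 + sqrt (real n) * (exp c - 1) \<le> 1 + real n * (exp c - 1)"
    using mult_right_mono[OF _ e] by simp
  also have "\<dots> \<le> (1 + (exp c - 1)) ^ n"
    by (rule Bernoulli_inequality) (use e in simp)
  also have "\<dots> = exp (real n * c)" by (simp add: exp_of_nat_mult)
  finally show ?thesis .
qed

lemma one_plus_norm_mexp_minus_1_le:
  "1 + norm (mexp C - mat 1) \<le> exp (real CARD('n) * opnorm C)"
  for C :: "complex^'n^'n"
proof -
  have "norm (mexp C - mat 1) \<le> sqrt (real CARD('n)) * (exp (opnorm C) - 1)"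
    by (rule order_trans[OF norm_le_sqrt_card_opnorm mult_left_mono[OF opnorm_mexp_minus_1_le]])
      simp
  also have "1 + \<dots> \<le> exp (real CARD('n) * opnorm C)"
    by (rule one_plus_sqrt_exp_minus_1_le) (simp_all add: opnorm_nonneg Suc_le_eq)
  finally show ?thesis by simp
qed

section \<open>Products along words\<close>

lemma foldr_Mprod_tail:
  "foldr (\<lambda>i P. E (k i) ** X ** P) xs Q = foldr (\<lambda>i P. E (k i) ** X ** P) xs (mat 1) ** Q"
  for Q :: "complex^'n^'n"
  by (induct xs) (simp_all add: matrix_mul_assoc)

lemma Mprod_0: "Mprod E X 0 k = mat 1"
  unfolding Mprod_def by simp

lemma Mprod_Suc: "Mprod E X (Suc m) k = Mprod E X m k ** (E (k m) ** X)"
  unfolding Mprod_def by simp (rule foldr_Mprod_tail)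

lemma Mprod_fun_upd: "Mprod E X m (k(m := b)) = Mprod E X m k"
  unfolding Mprod_def by (rule foldr_cong) auto

lemma sum_PiE_lessThan_Suc:
  fixes g :: "(nat \<Rightarrow> 'a) \<Rightarrow> 'b::comm_monoid_add"
  shows "(\<Sum>k\<in>{0..<Suc m} \<rightarrow>\<^sub>E S. g k) = (\<Sum>b\<in>S. \<Sum>k\<in>{0..<m} \<rightarrow>\<^sub>E S. g (k(m := b)))"
proof -
  have inj: "inj_on (\<lambda>(b, k). k(m := b)) (S \<times> ({0..<m} \<rightarrow>\<^sub>E S))"
    using inj_combinator[of m "{0..<m}" "\<lambda>_. S"] by simp
  have "{0..<Suc m} \<rightarrow>\<^sub>E S = (\<lambda>(b, k). k(m := b)) ` (S \<times> ({0..<m} \<rightarrow>\<^sub>E S))"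
    by (simp add: atLeast0_lessThan_Suc PiE_insert_eq)
  then have "(\<Sum>k\<in>{0..<Suc m} \<rightarrow>\<^sub>E S. g k) = (\<Sum>(b, k)\<in>S \<times> ({0..<m} \<rightarrow>\<^sub>E S). g (k(m := b)))"
    by (simp only:) (subst sum.reindex[OF inj]; simp add: case_prod_beta)
  also have "\<dots> = (\<Sum>b\<in>S. \<Sum>k\<in>{0..<m} \<rightarrow>\<^sub>E S. g (k(m := b)))"
    by (rule sum.cartesian_product[symmetric])
  finally show ?thesis .
qed

lemma sum_le_sqrt_card_L2_set:
  assumes "\<And>a. a \<in> S \<Longrightarrow> 0 \<le> f a"
  shows "sum f S \<le> sqrt (real (card S)) * L2_set f S"
proof -
  have "sum f S = (\<Sum>a\<in>S. \<bar>1\<bar> * \<bar>f a\<bar>)" using assms by (intro sum.cong) auto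
  also have "\<dots> \<le> L2_set (\<lambda>_. 1) S * L2_set f S" by (rule L2_set_mult_ineq)
  finally show ?thesis by (simp add: L2_set_constant)
qed

lemma L2_set_step_le:
  fixes H H' :: "'a \<Rightarrow> real" and r :: "'a \<Rightarrow> 'a \<Rightarrow> real"
  assumes fin: "finite S"
    and H_nonneg: "\<And>a. a \<in> S \<Longrightarrow> 0 \<le> H a"
    and H'_nonneg: "\<And>b. b \<in> S \<Longrightarrow> 0 \<le> H' b"
    and r_nonneg: "\<And>a b. a \<in> S \<Longrightarrow> b \<in> S \<Longrightarrow> 0 \<le> r a b"
    and H'_le: "\<And>b. b \<in> S \<Longrightarrow> H' b \<le> H b + (\<Sum>a\<in>S. H a * r a b)"
  shows "L2_set H' S \<le> (1 + L2_set (\<lambda>b. L2_set (\<lambda>a. r a b) S) S) * L2_set H S"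
proof -
  define G where "G b = (\<Sum>a\<in>S. H a * r a b)" for b
  have G_nonneg: "0 \<le> G b" if "b \<in> S" for b
    unfolding G_def using H_nonneg r_nonneg that by (auto intro!: sum_nonneg)
  have G_le: "G b \<le> L2_set H S * L2_set (\<lambda>a. r a b) S" if "b \<in> S" for b
  proof -
    have "G b = (\<Sum>a\<in>S. \<bar>H a\<bar> * \<bar>r a b\<bar>)"
      unfolding G_def using H_nonneg r_nonneg that by (intro sum.cong) auto
    also have "\<dots> \<le> L2_set H S * L2_set (\<lambda>a. r a b) S" by (rule L2_set_mult_ineq)
    finally show ?thesis .
  qed
  have "L2_set H' S \<le> L2_set (\<lambda>b. H b + G b) S"
    by (rule L2_set_mono) (use H'_le H'_nonneg in \<open>simp_all add: G_def\<close>)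
  also have "\<dots> \<le> L2_set H S + L2_set G S" by (rule L2_set_triangle_ineq)
  also have "L2_set G S \<le> L2_set (\<lambda>b. L2_set H S * L2_set (\<lambda>a. r a b) S) S"
    by (rule L2_set_mono[OF G_le G_nonneg])
  also have "\<dots> = L2_set H S * L2_set (\<lambda>b. L2_set (\<lambda>a. r a b) S) S"
    by (simp add: L2_set_right_distrib)
  finally show ?thesis by (simp add: algebra_simps)
qed

lemma L2_set_iterate_le:
  fixes H :: "nat \<Rightarrow> 'a \<Rightarrow> real" and r :: "'a \<Rightarrow> 'a \<Rightarrow> real"
  assumes "finite S"
    and "\<And>m a. a \<in> S \<Longrightarrow> 0 \<le> H m a"
    and "\<And>a b. a \<in> S \<Longrightarrow> b \<in> S \<Longrightarrow> 0 \<le> r a b"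
    and "\<And>m b. b \<in> S \<Longrightarrow> H (Suc m) b \<le> H m b + (\<Sum>a\<in>S. H m a * r a b)"
  shows "L2_set (H m) S \<le> (1 + L2_set (\<lambda>b. L2_set (\<lambda>a. r a b) S) S) ^ m * L2_set (H 0) S"
proof (induct m)
  case 0
  then show ?case by simp
next
  case (Suc m)
  have "L2_set (H (Suc m)) S \<le> (1 + L2_set (\<lambda>b. L2_set (\<lambda>a. r a b) S) S) * L2_set (H m) S"
    by (rule L2_set_step_le) (use assms in auto)
  also have "\<dots> \<le> (1 + L2_set (\<lambda>b. L2_set (\<lambda>a. r a b) S) S) ^ Suc m * L2_set (H 0) S"
    using mult_left_mono[OF Suc, of "1 + L2_set (\<lambda>b. L2_set (\<lambda>a. r a b) S) S"]
    by (simp add: mult_ac add_nonneg_nonneg)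
  finally show ?case .
qed

definition prefix_weight ::
  "(complex \<Rightarrow> complex^'n^'n) \<Rightarrow> complex^'n^'n \<Rightarrow> complex set \<Rightarrow> nat \<Rightarrow> complex \<Rightarrow> real" where
  "prefix_weight E X S m b = (\<Sum>k\<in>{0..<m} \<rightarrow>\<^sub>E S. opnorm (Mprod E X m k ** E b))"

lemma prefix_weight_nonneg: "0 \<le> prefix_weight E X S m b"
  unfolding prefix_weight_def by (rule sum_nonneg) (rule opnorm_nonneg)

lemma sum_opnorm_Mprod_Suc_le:
  assumes E: "projector_resolution S E"
  shows "(\<Sum>k\<in>{0..<Suc m} \<rightarrow>\<^sub>E S. opnorm (Mprod E X (Suc m) k ** R))
    \<le> (\<Sum>a\<in>S. prefix_weight E X S m a * opnorm (E a ** X ** R))"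
proof -
  have split: "Mprod E X m k ** (E a ** X) ** R = (Mprod E X m k ** E a) ** (E a ** X ** R)"
    if "a \<in> S" for a k
    using projector_resolutionD(3)[OF E that that] by (metis matrix_mul_assoc)
  have "(\<Sum>k\<in>{0..<Suc m} \<rightarrow>\<^sub>E S. opnorm (Mprod E X (Suc m) k ** R))
      = (\<Sum>a\<in>S. \<Sum>k\<in>{0..<m} \<rightarrow>\<^sub>E S. opnorm (Mprod E X m k ** (E a ** X) ** R))"
    by (simp add: sum_PiE_lessThan_Suc Mprod_Suc Mprod_fun_upd)
  also have "\<dots> \<le> (\<Sum>a\<in>S. \<Sum>k\<in>{0..<m} \<rightarrow>\<^sub>E S.
      opnorm (Mprod E X m k ** E a) * opnorm (E a ** X ** R))"
    by (intro sum_mono) (simp add: split opnorm_matrix_mult_le)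
  also have "\<dots> = (\<Sum>a\<in>S. prefix_weight E X S m a * opnorm (E a ** X ** R))"
    by (simp add: prefix_weight_def sum_distrib_right)
  finally show ?thesis .
qed

lemma opnorm_sandwich_le:
  assumes E: "projector_resolution S E" and "a \<in> S" "b \<in> S"
  shows "opnorm (E a ** X ** E b) \<le> (if a = b then 1 else 0) + norm (E a ** (X - mat 1) ** E b)"
proof -
  have "E a ** X ** E b = E a ** (mat 1 + (X - mat 1)) ** E b" by simp
  also have "\<dots> = E a ** E b + E a ** (X - mat 1) ** E b"
    by (simp only: matrix_add_ldistrib mat_add_rdistrib matrix_mul_rid)
  finally have "opnorm (E a ** X ** E b) \<le> opnorm (E a ** E b) + opnorm (E a ** (X - mat 1) ** E b)"
    by (simp add: opnorm_add_le)
  also have "opnorm (E a ** E b) \<le> (if a = b then 1 else 0)"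
    using projector_resolutionD(3)[OF E assms(2,3)] projector_resolution_opnorm_le_1[OF E assms(2)]
    by (auto simp: opnorm_zero)
  also have "opnorm (E a ** (X - mat 1) ** E b) \<le> norm (E a ** (X - mat 1) ** E b)"
    by (rule opnorm_le_norm)
  finally show ?thesis by simp
qed

lemma prefix_weight_Suc_le:
  assumes E: "projector_resolution S E" and b: "b \<in> S"
  shows "prefix_weight E X S (Suc m) b
    \<le> prefix_weight E X S m b + (\<Sum>a\<in>S. prefix_weight E X S m a * norm (E a ** (X - mat 1) ** E b))"
proof -
  let ?H = "prefix_weight E X S m" and ?r = "\<lambda>a. norm (E a ** (X - mat 1) ** E b)"
  have "prefix_weight E X S (Suc m) b \<le> (\<Sum>a\<in>S. ?H a * opnorm (E a ** X ** E b))"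
    using sum_opnorm_Mprod_Suc_le[OF E] by (simp add: prefix_weight_def)
  also have "\<dots> \<le> (\<Sum>a\<in>S. ?H a * ((if a = b then 1 else 0) + ?r a))"
    by (intro sum_mono mult_left_mono opnorm_sandwich_le[OF E _ b] prefix_weight_nonneg)
  also have "\<dots> = (\<Sum>a\<in>S. if a = b then ?H a else 0) + (\<Sum>a\<in>S. ?H a * ?r a)"
    by (subst sum.distrib[symmetric]) (rule sum.cong; simp add: distrib_left)
  also have "(\<Sum>a\<in>S. if a = b then ?H a else 0) = ?H b"
    using projector_resolutionD(1)[OF E] b by (simp add: sum.delta)
  finally show ?thesis .
qed

lemma L2_set_prefix_weight_le:
  assumes E: "projector_resolution S E"
  shows "L2_set (prefix_weight E X S m) S \<le> (1 + norm (X - mat 1)) ^ m * sqrt (real (card S))"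
proof -
  let ?r = "\<lambda>a b. norm (E a ** (X - mat 1) ** E b)"
  have "L2_set (\<lambda>b. L2_set (\<lambda>a. ?r a b) S) S = sqrt ((norm (X - mat 1))^2)"
    unfolding L2_set_def
    by (simp add: sum_nonneg projector_resolution_norm_sandwich_sq[OF E])
  then have rho: "L2_set (\<lambda>b. L2_set (\<lambda>a. ?r a b) S) S = norm (X - mat 1)" by simp
  have "L2_set (prefix_weight E X S 0) S \<le> L2_set (\<lambda>_. 1) S"
    by (rule L2_set_mono)
      (simp_all add: prefix_weight_def Mprod_0 projector_resolution_opnorm_le_1[OF E]
        opnorm_nonneg)
  then have start: "L2_set (prefix_weight E X S 0) S \<le> sqrt (real (card S))"
    by (simp add: L2_set_constant)
  have "L2_set (prefix_weight E X S m) S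
    \<le> (1 + norm (X - mat 1)) ^ m * L2_set (prefix_weight E X S 0) S"
    using L2_set_iterate_le[of S "prefix_weight E X S" ?r m, OF projector_resolutionD(1)[OF E]
        prefix_weight_nonneg norm_ge_zero prefix_weight_Suc_le[OF E]] rho
    by simp
  also have "\<dots> \<le> (1 + norm (X - mat 1)) ^ m * sqrt (real (card S))"
    by (rule mult_left_mono[OF start]) simp
  finally show ?thesis .
qed

text \<open>Cauchy--Schwarz turns the \<open>\<ell>\<^sup>2\<close> bound on the weights into an \<open>\<ell>\<^sup>1\<close> bound.\<close>

lemma sum_opnorm_Mprod_le:
  assumes E: "projector_resolution S E"
  shows "(\<Sum>k\<in>{0..<Suc m} \<rightarrow>\<^sub>E S. opnorm (Mprod E X (Suc m) k))
    \<le> real (card S) * opnorm X * (1 + norm (X - mat 1)) ^ m"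
proof -
  let ?H = "prefix_weight E X S m"
  have "(\<Sum>k\<in>{0..<Suc m} \<rightarrow>\<^sub>E S. opnorm (Mprod E X (Suc m) k))
      \<le> (\<Sum>a\<in>S. ?H a * opnorm (E a ** X ** mat 1))"
    using sum_opnorm_Mprod_Suc_le[OF E, where R="mat 1"] by simp
  also have "\<dots> \<le> (\<Sum>a\<in>S. ?H a * opnorm X)"
  proof (intro sum_mono mult_left_mono prefix_weight_nonneg)
    fix a assume "a \<in> S"
    have "opnorm (E a ** X) \<le> 1 * opnorm X"
      by (rule order_trans[OF opnorm_matrix_mult_le mult_right_mono])
        (simp_all add: projector_resolution_opnorm_le_1[OF E \<open>a \<in> S\<close>] opnorm_nonneg)
    then show "opnorm (E a ** X ** mat 1) \<le> opnorm X" by simp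
  qed
  also have "\<dots> = opnorm X * sum ?H S" by (simp add: sum_distrib_left mult.commute)
  also have "\<dots> \<le> opnorm X * (sqrt (real (card S)) * L2_set ?H S)"
    by (intro mult_left_mono sum_le_sqrt_card_L2_set prefix_weight_nonneg opnorm_nonneg)
  also have "\<dots> \<le> opnorm X * (sqrt (real (card S)) * ((1 + norm (X - mat 1)) ^ m * sqrt (real (card S))))"
    by (intro mult_left_mono L2_set_prefix_weight_le[OF E] opnorm_nonneg) simp
  also have "\<dots> = real (card S) * opnorm X * (1 + norm (X - mat 1)) ^ m"
    by simp
  finally show ?thesis .
qed

theorem lemma6p1:
  fixes A B :: "complex^'n^'n" and E :: "complex \<Rightarrow> complex^'n^'n" and N :: nat
  assumes herm: "hermitian A"
    and N: "N > 0"
    and proj: "\<And>\<mu>. \<mu> \<in> eigenvalues A \<Longrightarrow> hermitian (E \<mu>) \<and> E \<mu> ** E \<mu> = E \<mu>"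
    and eig: "\<And>\<mu>. \<mu> \<in> eigenvalues A \<Longrightarrow> A ** E \<mu> = mat \<mu> ** E \<mu>"
    and sumI: "(\<Sum>\<mu>\<in>eigenvalues A. E \<mu>) = mat 1"
  shows "(\<Sum>k\<in>{0..<N} \<rightarrow>\<^sub>E eigenvalues A.
            opnorm (Mprod E (mexp ((1 / real N) *\<^sub>R B)) N k))
         \<le> real CARD('n) * exp (real CARD('n) * opnorm B)"
proof -
  interpret spectral_resolution A E by unfold_locales (use assms in auto)
  obtain m where m: "N = Suc m" using N gr0_conv_Suc by auto
  define C where "C = (1 / real N) *\<^sub>R B"
  define n where "n = real CARD('n)"
  have "opnorm C \<le> opnorm B / real N"
    using opnorm_scaleR_le[of "1 / real N" B] by (simp add: C_def)
  then have NC: "real N * (n * opnorm C) \<le> n * opnorm B"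
    using N by (simp add: n_def field_simps)
  have "opnorm (mexp C) \<le> exp (n * opnorm C)"
    using opnorm_mexp_le[of C] opnorm_nonneg[of C]
    by (simp add: n_def order_trans[OF _ exp_mono] mult_le_cancel_right1 Suc_le_eq)
  have "(\<Sum>k\<in>{0..<N} \<rightarrow>\<^sub>E eigenvalues A. opnorm (Mprod E (mexp C) N k))
      \<le> real (card (eigenvalues A)) * opnorm (mexp C) * (1 + norm (mexp C - mat 1)) ^ m"
    unfolding m by (rule sum_opnorm_Mprod_le[OF projector_resolution])
  also have "\<dots> \<le> n * exp (n * opnorm C) * exp (n * opnorm C) ^ m"
    using card_eigenvalues_le \<open>opnorm (mexp C) \<le> exp (n * opnorm C)\<close>
      one_plus_norm_mexp_minus_1_le[of C]
    by (intro mult_mono power_mono) (simp_all add: n_def opnorm_nonneg)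
  also have "\<dots> = n * exp (real N * (n * opnorm C))"
    by (simp add: m exp_add exp_of_nat_mult[symmetric] algebra_simps)
  also have "\<dots> \<le> n * exp (n * opnorm B)"
    using NC by (simp add: n_def)
  finally show ?thesis by (simp add: C_def n_def)
qed

end
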